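(* Let $\alpha>0$ and $\beta\in\mathbb{R}$ satisfy one of: $\beta\le\alpha<1$; or $\beta\le 1<\alpha$; or $\beta<\alpha=1$. Then the generalized $\beta$-Ces\`aro operator $C_{g_\beta}$ is a bounded linear operator from $(\mathcal{B}_\alpha^0,\|\cdot\|_{\mathcal{B}_\alpha})$ to itself.
   Context: $\mathbb{D}=\{z\in\mathbb{C}:|z|<1\}$. For $\alpha>0$, the $\alpha$-Bloch space $\mathcal{B}_\alpha$ is the space of analytic functions $f$ on $\mathbb{D}$ with $\|f\|_{\mathcal{B}_\alpha}:=\sup_{z\in\mathbb{D}}(1-|z|^2)^\alpha|f'(z)|<\infty$. $\mathcal{B}_\alpha^0=\{f\in\mathcal{B}_\alpha: f(0)=0\}$, normed by $\|\cdot\|_{\mathcal{B}_\alpha}$. For $\beta\in\mathbb{R}$, let $g_\beta(w)=\sum_{j=1}^k\frac{a_j}{(1-b_jw)^\beta}+h(w)$, where $k\ge1$, $b_1,\dots,b_k$ are distinct points of the unit circle, $a_j\in\mathbb{C}$ with $|a_j|>0$, $h$ is a bounded analytic function on $\mathbb{D}$, and powers are principal branches. The generalized $\beta$-Ces\`aro operator is $C_{g_\beta}(f)(z)=\int_0^z\frac{f(w)g_\beta(w)}{w}\,dw$ for analytic $f$ on $\mathbb{D}$ with $f(0)=0$. *)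

theory Defs
  imports "HOL-Complex_Analysis.Complex_Analysis"
begin

definition bloch_norm :: "real \<Rightarrow> (complex \<Rightarrow> complex) \<Rightarrow> real" where
  "bloch_norm \<alpha> f = (SUP z\<in>ball 0 1. (1 - (norm z)\<^sup>2) powr \<alpha> * norm (deriv f z))"

definition bloch_space :: "real \<Rightarrow> (complex \<Rightarrow> complex) set" where
  "bloch_space \<alpha> = {f. f holomorphic_on ball 0 1 \<and>
      bdd_above ((\<lambda>z. (1 - (norm z)\<^sup>2) powr \<alpha> * norm (deriv f z)) ` ball 0 1)}"

definition bloch_space0 :: "real \<Rightarrow> (complex \<Rightarrow> complex) set" where
  "bloch_space0 \<alpha> = {f \<in> bloch_space \<alpha>. f 0 = 0}"

definition g_beta :: "real \<Rightarrow> nat \<Rightarrow> (nat \<Rightarrow> complex) \<Rightarrow> (nat \<Rightarrow> complex)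
    \<Rightarrow> (complex \<Rightarrow> complex) \<Rightarrow> complex \<Rightarrow> complex" where
  "g_beta \<beta> k a b h w = (\<Sum>j<k. a j / (1 - b j * w) powr (complex_of_real \<beta>)) + h w"

definition cesaro_op :: "(complex \<Rightarrow> complex) \<Rightarrow> (complex \<Rightarrow> complex) \<Rightarrow> complex \<Rightarrow> complex" where
  "cesaro_op g f z = contour_integral (linepath 0 z) (\<lambda>w. f w * g w / w)"

end

theory Submission
  imports Defs
begin

text \<open>
  The derivative of \<open>C\<^sub>g f\<close> is \<open>g(z) f(z) / z\<close>. If \<open>f\<close> lies in the \<open>\<alpha>\<close>-Bloch space
  and \<open>\<gamma> \<ge> \<alpha>\<close>, then \<open>|f'(w)| \<le> \<parallel>f\<parallel> (1 - |w|) powr -\<gamma>\<close>, and integrating along the radius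
  gives \<open>|f(z) / z| \<le> c \<parallel>f\<parallel> (1 - |z|) powr -\<delta>\<close> with \<open>\<delta> = max 0 (\<gamma> - 1)\<close>, as long as
  \<open>\<gamma> \<noteq> 1\<close>. Since \<open>|1 - b\<^sub>j z| \<ge> 1 - |z|\<close>, the symbol satisfies
  \<open>|g(z)| \<le> K (1 - |z|) powr -\<beta>'\<close> with \<open>\<beta>' = max \<beta> 0\<close>. Hence the weighted derivative
  \<open>(1 - |z|\<^sup>2) powr \<alpha> |(C\<^sub>g f)'(z)|\<close> is at most a constant times
  \<open>\<parallel>f\<parallel> (1 - |z|) powr (\<alpha> - \<delta> - \<beta>')\<close>. The hypotheses on \<open>\<alpha>\<close> and \<open>\<beta>\<close> are exactly what is
  needed to pick \<open>\<gamma> \<noteq> 1\<close> making this exponent nonnegative: \<open>\<gamma> = \<alpha>\<close> if \<open>\<alpha> \<noteq> 1\<close>, and \<open>\<gamma>\<close>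
  slightly above 1 if \<open>\<alpha> = 1\<close>, which sidesteps the logarithmic growth at the critical exponent.
\<close>

definition slope0 :: "(complex \<Rightarrow> complex) \<Rightarrow> complex \<Rightarrow> complex" where
  "slope0 f w = (if w = 0 then deriv f 0 else (f w - f 0) / w)"

lemma holomorphic_on_slope0:
  assumes "f holomorphic_on S" "open S"
  shows "slope0 f holomorphic_on S"
proof -
  have "(\<lambda>w. if w = 0 then deriv f 0 else (f w - f 0) / (w - 0)) = slope0 f"
    by (simp add: fun_eq_iff slope0_def)
  with pole_lemma_open[OF assms, of 0] show ?thesis by simp
qed

lemma norm_diff_le_of_deriv_powr_bound:
  fixes f :: "complex \<Rightarrow> complex"
  assumes hol: "f holomorphic_on ball 0 1" and "\<gamma> \<noteq> 1"
    and bd: "\<And>w. w \<in> ball 0 1 \<Longrightarrow> norm (deriv f w) \<le> M * (1 - norm w) powr (-\<gamma>)"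
    and z: "z \<in> ball 0 1"
  shows "norm (f z - f 0) \<le> M * (1 - (1 - norm z) powr (1 - \<gamma>)) / (1 - \<gamma>)"
proof -
  define r where "r = norm z"
  have r: "0 \<le> r" "r < 1" using z by (auto simp: r_def)
  have inb: "of_real t * z \<in> ball 0 1" and norm_tz: "norm (of_real t * z) = t * r"
    if "0 \<le> t" "t \<le> 1" for t
    using that r mult_left_le_one_le[of r t] by (auto simp: r_def norm_mult)
  have pos: "0 < 1 - t * r" if "t \<le> 1" for t
    using mult_right_mono[OF that r(1)] r by simp
  define \<phi> where "\<phi> = (\<lambda>t. - M * (1 - t * r) powr (1 - \<gamma>) / (1 - \<gamma>))"
  define \<phi>' where "\<phi>' = (\<lambda>t. M * r * (1 - t * r) powr (-\<gamma>))"
  have \<phi>_deriv: "(\<phi> has_real_derivative \<phi>' t) (at t)" if "t \<le> 1" for t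
    unfolding \<phi>_def \<phi>'_def using pos[OF that] \<open>\<gamma> \<noteq> 1\<close>
    by (auto intro!: derivative_eq_intros)
  have radial_deriv:
    "((\<lambda>t. f (of_real t * z)) has_vector_derivative z * deriv f (of_real t * z)) (at t)"
    if "0 \<le> t" "t \<le> 1" for t
  proof -
    have "((\<lambda>t. of_real t * z) has_vector_derivative z) (at t)"
      by (auto intro!: derivative_eq_intros)
    from field_vector_diff_chain_at[OF this holomorphic_derivI[OF hol open_ball inb[OF that]]]
    show ?thesis by (simp add: o_def)
  qed
  have radial_bound: "norm (z * deriv f (of_real t * z)) \<le> \<phi>' t" if "0 \<le> t" "t \<le> 1" for t
    using mult_left_mono[OF bd[OF inb[OF that]] norm_ge_zero[of z]] that
    by (simp add: \<phi>'_def norm_tz[OF that] norm_mult r_def mult_ac)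
  have "continuous_on {0..1} (\<lambda>t. f (of_real t * z))"
    by (rule continuous_on_compose2[OF holomorphic_on_imp_continuous_on[OF hol]])
       (auto intro!: continuous_intros inb)
  moreover have "continuous_on {0..1} \<phi>"
    using \<phi>_deriv by (meson DERIV_isCont atLeastAtMost_iff continuous_at_imp_continuous_on)
  ultimately have "norm (f (of_real 1 * z) - f (of_real 0 * z)) \<le> \<phi> 1 - \<phi> 0"
    by (rule differentiable_bound_general[OF zero_less_one])
       (auto intro: radial_deriv radial_bound
          has_real_derivative_iff_has_vector_derivative[THEN iffD1, OF \<phi>_deriv])
  then show ?thesis
    by (simp add: \<phi>_def r_def diff_divide_distrib right_diff_distrib)
qed

lemma norm_diff_le_of_deriv_powr_bound':
  fixes f :: "complex \<Rightarrow> complex"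
  assumes "f holomorphic_on ball 0 1" "\<gamma> \<noteq> 1" "M \<ge> 0"
    and "\<And>w. w \<in> ball 0 1 \<Longrightarrow> norm (deriv f w) \<le> M * (1 - norm w) powr (-\<gamma>)"
    and z: "z \<in> ball 0 1"
  shows "norm (f z - f 0) \<le> M / \<bar>1 - \<gamma>\<bar> * (1 - norm z) powr (- max 0 (\<gamma> - 1))"
proof -
  note growth = norm_diff_le_of_deriv_powr_bound[OF assms(1,2,4) z]
  have "0 < 1 - norm z" using z by simp
  show ?thesis
  proof (cases "\<gamma> < 1")
    case True
    have "M * (1 - (1 - norm z) powr (1 - \<gamma>)) / (1 - \<gamma>) \<le> M * 1 / (1 - \<gamma>)"
      using True \<open>M \<ge> 0\<close> by (intro divide_right_mono mult_left_mono) auto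
    with growth True \<open>0 < 1 - norm z\<close> show ?thesis by simp
  next
    case False
    then have "\<gamma> > 1" using \<open>\<gamma> \<noteq> 1\<close> by simp
    have "M * (1 - (1 - norm z) powr (1 - \<gamma>)) / (1 - \<gamma>) = M * ((1 - norm z) powr (1 - \<gamma>) - 1) / (\<gamma> - 1)"
      using \<open>\<gamma> > 1\<close> by (simp add: field_simps)
    also have "\<dots> \<le> M * (1 - norm z) powr (1 - \<gamma>) / (\<gamma> - 1)"
      using \<open>\<gamma> > 1\<close> \<open>M \<ge> 0\<close> by (intro divide_right_mono mult_left_mono) auto
    finally show ?thesis using growth \<open>\<gamma> > 1\<close> by simp
  qed
qed

lemma norm_slope0_le:
  fixes f :: "complex \<Rightarrow> complex"
  assumes hol: "f holomorphic_on ball 0 1" and "0 \<le> \<gamma>" "\<gamma> \<noteq> 1" "M \<ge> 0"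
    and bd: "\<And>w. w \<in> ball 0 1 \<Longrightarrow> norm (deriv f w) \<le> M * (1 - norm w) powr (-\<gamma>)"
    and z: "z \<in> ball 0 1"
  shows "norm (slope0 f z) \<le> M * max (2 powr \<gamma>) (2 / \<bar>1 - \<gamma>\<bar>) * (1 - norm z) powr (- max 0 (\<gamma> - 1))"
    (is "_ \<le> M * ?C * ?s")
proof -
  have "0 < 1 - norm z" using z by simp
  then have "1 \<le> ?s"
    using powr_mono'[of "- max 0 (\<gamma> - 1)" 0 "1 - norm z"] by simp
  have deriv_near_0: "norm (deriv f w) \<le> M * 2 powr \<gamma>" if "norm w \<le> 1/2" for w
  proof -
    have "norm (deriv f w) \<le> M * (1 - norm w) powr (-\<gamma>)"
      using bd that by simp
    also have "\<dots> \<le> M * (1/2) powr (-\<gamma>)"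
      using that \<open>0 \<le> \<gamma>\<close> \<open>M \<ge> 0\<close> by (intro mult_left_mono powr_mono2') auto
    finally show ?thesis
      by (simp add: powr_minus powr_divide)
  qed
  have "M * 2 powr \<gamma> \<le> M * ?C"
    using \<open>M \<ge> 0\<close> by (intro mult_left_mono) auto
  also have "\<dots> \<le> M * ?C * ?s"
    using \<open>1 \<le> ?s\<close> \<open>M \<ge> 0\<close> mult_left_mono[of 1 ?s "M * ?C"] by (simp add: max.coboundedI1)
  finally have near_0: "M * 2 powr \<gamma> \<le> M * ?C * ?s" .
  consider "z = 0" | "z \<noteq> 0" "norm z \<le> 1/2" | "norm z > 1/2" by linarith
  then show ?thesis
  proof cases
    case 1
    then show ?thesis
      using deriv_near_0[of 0] near_0 by (simp add: slope0_def)
  next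
    case 2
    have "norm (f z - f 0) \<le> M * 2 powr \<gamma> * norm (z - 0)"
    proof (rule field_differentiable_bound[OF convex_cball])
      show "(f has_field_derivative deriv f w) (at w within cball 0 (1/2))"
        if "w \<in> cball 0 (1/2)" for w
        using that by (intro holomorphic_derivI[OF hol open_ball]) auto
    qed (use 2 deriv_near_0 in auto)
    with 2 have "norm (slope0 f z) \<le> M * 2 powr \<gamma>"
      by (simp add: slope0_def norm_divide divide_le_eq mult.commute)
    with near_0 show ?thesis by linarith
  next
    case 3
    have "z \<noteq> 0" using 3 by auto
    with 3 have "norm (slope0 f z) \<le> 2 * norm (f z - f 0)"
      using mult_left_mono[of 1 "2 * norm z" "norm (f z - f 0)"]
      by (simp add: slope0_def norm_divide divide_le_eq mult_ac)
    also have "norm (f z - f 0) \<le> M / \<bar>1 - \<gamma>\<bar> * ?s"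
      by (rule norm_diff_le_of_deriv_powr_bound') (use assms in auto)
    also have "2 * (M / \<bar>1 - \<gamma>\<bar> * ?s) = M * (2 / \<bar>1 - \<gamma>\<bar>) * ?s"
      by simp
    also have "\<dots> \<le> M * ?C * ?s"
      using \<open>M \<ge> 0\<close> by (intro mult_right_mono mult_left_mono) auto
    finally show ?thesis by simp
  qed
qed

lemma bloch_space0D:
  assumes "f \<in> bloch_space0 \<alpha>"
  shows "f holomorphic_on ball 0 1" "f 0 = 0" "f \<in> bloch_space \<alpha>"
  using assms by (auto simp: bloch_space0_def bloch_space_def)

lemma bloch_norm_upper:
  assumes "f \<in> bloch_space \<alpha>" "w \<in> ball 0 1"
  shows "(1 - (norm w)\<^sup>2) powr \<alpha> * norm (deriv f w) \<le> bloch_norm \<alpha> f"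
  using assms unfolding bloch_norm_def bloch_space_def by (auto intro: cSUP_upper)

lemma bloch_norm_nonneg:
  assumes "f \<in> bloch_space \<alpha>"
  shows "0 \<le> bloch_norm \<alpha> f"
  using bloch_norm_upper[OF assms, of 0] by (simp add: order_trans[OF norm_ge_zero])

lemma bloch_norm_le:
  assumes "\<And>z. z \<in> ball 0 1 \<Longrightarrow> (1 - (norm z)\<^sup>2) powr \<alpha> * norm (deriv f z) \<le> B"
  shows "bloch_norm \<alpha> f \<le> B"
  unfolding bloch_norm_def using assms by (intro cSUP_least) auto

lemma bloch_space0I:
  assumes "f holomorphic_on ball 0 1" "f 0 = 0"
    and "\<And>z. z \<in> ball 0 1 \<Longrightarrow> (1 - (norm z)\<^sup>2) powr \<alpha> * norm (deriv f z) \<le> B"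
  shows "f \<in> bloch_space0 \<alpha>"
proof -
  have "bdd_above ((\<lambda>z. (1 - (norm z)\<^sup>2) powr \<alpha> * norm (deriv f z)) ` ball 0 1)"
    by (rule bdd_aboveI2) (rule assms(3))
  with assms(1,2) show ?thesis by (simp add: bloch_space0_def bloch_space_def)
qed

lemma norm_deriv_le_bloch_norm:
  assumes f: "f \<in> bloch_space \<alpha>" and "0 \<le> \<alpha>" "\<alpha> \<le> \<gamma>" and w: "w \<in> ball 0 1"
  shows "norm (deriv f w) \<le> bloch_norm \<alpha> f * (1 - norm w) powr (-\<gamma>)"
proof -
  define p where "p = 1 - norm w"
  have p: "0 < p" "p \<le> 1" using w by (auto simp: p_def)
  have "p \<le> 1 - (norm w)\<^sup>2"
    using w by (simp add: p_def power2_eq_square mult_left_le_one_le)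
  then have "p powr \<alpha> * norm (deriv f w) \<le> bloch_norm \<alpha> f"
    using p \<open>0 \<le> \<alpha>\<close> bloch_norm_upper[OF f w]
    by (meson order_trans mult_right_mono norm_ge_zero powr_mono2 less_imp_le)
  then have "norm (deriv f w) \<le> bloch_norm \<alpha> f * p powr (-\<alpha>)"
    using p by (simp add: powr_minus field_simps)
  also have "\<dots> \<le> bloch_norm \<alpha> f * p powr (-\<gamma>)"
    using p \<open>\<alpha> \<le> \<gamma>\<close> bloch_norm_nonneg[OF f] by (intro mult_left_mono powr_mono') auto
  finally show ?thesis by (simp add: p_def)
qed

lemma weighted_norm_slope0_mult_le:
  fixes f g :: "complex \<Rightarrow> complex"
  assumes f: "f \<in> bloch_space \<alpha>" and "0 \<le> \<alpha>" "\<alpha> \<le> \<gamma>" "\<gamma> \<noteq> 1"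
    and exponent: "max 0 (\<gamma> - 1) + \<beta> \<le> \<alpha>"
    and g: "\<And>w. w \<in> ball 0 1 \<Longrightarrow> norm (g w) \<le> K * (1 - norm w) powr (-\<beta>)"
    and z: "z \<in> ball 0 1"
  shows "(1 - (norm z)\<^sup>2) powr \<alpha> * norm (slope0 f z * g z)
    \<le> 2 powr \<alpha> * max (2 powr \<gamma>) (2 / \<bar>1 - \<gamma>\<bar>) * K * bloch_norm \<alpha> f"
proof -
  define M where "M = bloch_norm \<alpha> f"
  define C where "C = max (2 powr \<gamma>) (2 / \<bar>1 - \<gamma>\<bar>)"
  define s where "s = 1 - norm z"
  define \<delta> where "\<delta> = max 0 (\<gamma> - 1)"
  have s: "0 < s" "s \<le> 1" using z by (auto simp: s_def)
  have "M \<ge> 0" "C \<ge> 0"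
    using bloch_norm_nonneg[OF f] by (auto simp: M_def C_def max.coboundedI1)
  have g_z: "norm (g z) \<le> K * s powr (-\<beta>)"
    using g[OF z] by (simp add: s_def)
  then have "K \<ge> 0"
    using s order_trans[OF norm_ge_zero g_z] by (simp add: zero_le_mult_iff)
  have "1 - (norm z)\<^sup>2 \<le> 2 * s"
    using zero_le_power2[of "1 - norm z"] by (simp add: s_def power2_eq_square algebra_simps)
  moreover have "0 \<le> 1 - (norm z)\<^sup>2"
    using z by (simp add: power_le_one)
  ultimately have weight: "(1 - (norm z)\<^sup>2) powr \<alpha> \<le> 2 powr \<alpha> * s powr \<alpha>"
    using s \<open>0 \<le> \<alpha>\<close> by (simp add: powr_mult[symmetric] powr_mono2)
  have slope: "norm (slope0 f z) \<le> M * C * s powr (-\<delta>)"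
    unfolding M_def C_def s_def \<delta>_def
  proof (rule norm_slope0_le)
    show "f holomorphic_on ball 0 1"
      using f by (simp add: bloch_space_def)
    show "norm (deriv f w) \<le> bloch_norm \<alpha> f * (1 - norm w) powr (-\<gamma>)" if "w \<in> ball 0 1" for w
      using f \<open>0 \<le> \<alpha>\<close> \<open>\<alpha> \<le> \<gamma>\<close> that by (rule norm_deriv_le_bloch_norm)
  qed (use assms bloch_norm_nonneg[OF f] in auto)
  have "(1 - (norm z)\<^sup>2) powr \<alpha> * norm (slope0 f z * g z)
      \<le> (2 powr \<alpha> * s powr \<alpha>) * ((M * C * s powr (-\<delta>)) * (K * s powr (-\<beta>)))"
    unfolding norm_mult using weight slope g_z \<open>M \<ge> 0\<close> \<open>C \<ge> 0\<close>
    by (intro mult_mono) auto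
  also have "\<dots> = 2 powr \<alpha> * C * K * M * (s powr \<alpha> * s powr (-\<delta>) * s powr (-\<beta>))"
    by (simp add: mult_ac)
  also have "\<dots> = 2 powr \<alpha> * C * K * M * s powr (\<alpha> - \<delta> - \<beta>)"
    by (simp add: powr_add[symmetric])
  also have "\<dots> \<le> 2 powr \<alpha> * C * K * M"
    using s exponent \<open>M \<ge> 0\<close> \<open>C \<ge> 0\<close> \<open>K \<ge> 0\<close>
    by (intro mult_right_le_one_le powr_le1) (auto simp: \<delta>_def)
  finally show ?thesis by (simp add: M_def C_def mult_ac)
qed

lemma exists_admissible_exponent:
  fixes \<alpha> \<beta> :: real
  assumes "\<alpha> > 0"
    and "(\<beta> \<le> \<alpha> \<and> \<alpha> < 1) \<or> (\<beta> \<le> 1 \<and> 1 < \<alpha>) \<or> (\<beta> < \<alpha> \<and> \<alpha> = 1)"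
  shows "\<exists>\<gamma>. 0 < \<gamma> \<and> \<gamma> \<noteq> 1 \<and> \<alpha> \<le> \<gamma> \<and> max 0 (\<gamma> - 1) + max \<beta> 0 \<le> \<alpha>"
proof -
  consider "\<alpha> \<noteq> 1" "max 0 (\<alpha> - 1) + max \<beta> 0 \<le> \<alpha>" | "\<alpha> = 1" "\<beta> < 1"
    using assms by (auto simp: max_def)
  then show ?thesis
  proof cases
    case 1
    with \<open>\<alpha> > 0\<close> show ?thesis by blast
  next
    case 2
    then show ?thesis
      by (intro exI[of _ "1 + (1 - max \<beta> 0) / 2"]) (auto simp: max_def field_simps)
  qed
qed

lemma unimodular_shift_bounds:
  fixes c w :: complex
  assumes "norm c = 1" "w \<in> ball 0 1"
  shows "0 < Re (1 - c * w)" "1 - norm w \<le> norm (1 - c * w)" "norm (1 - c * w) \<le> 2"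
proof -
  have cw: "norm (c * w) = norm w" "norm w < 1"
    using assms by (simp_all add: norm_mult)
  show "0 < Re (1 - c * w)"
    using complex_Re_le_cmod[of "c * w"] cw by simp
  show "1 - norm w \<le> norm (1 - c * w)"
    using norm_triangle_ineq2[of 1 "c * w"] cw by simp
  show "norm (1 - c * w) \<le> 2"
    using norm_triangle_ineq4[of 1 "c * w"] cw by simp
qed

lemma g_beta_holomorphic:
  assumes "\<And>j. j < k \<Longrightarrow> norm (b j) = 1" "h holomorphic_on ball 0 1"
  shows "g_beta \<beta> k a b h holomorphic_on ball 0 1"
proof -
  have "0 < Re (1 - b j * w)" if "j < k" "w \<in> ball 0 1" for j w
    using unimodular_shift_bounds(1)[OF assms(1) that(2)] that(1) by simp
  then have "1 - b j * w \<notin> \<real>\<^sub>\<le>\<^sub>0" "1 - b j * w \<noteq> 0" if "j < k" "w \<in> ball 0 1" for j w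
    using that by (fastforce simp: complex_nonpos_Reals_iff)+
  then show ?thesis
    unfolding g_beta_def[abs_def] by (intro holomorphic_intros assms(2)) auto
qed

lemma powr_minus_le_two_powr:
  fixes s q \<beta> :: real
  assumes "0 < s" "s \<le> q" "q \<le> 2"
  shows "q powr (-\<beta>) \<le> 2 powr (max \<beta> 0 - \<beta>) * s powr (- max \<beta> 0)"
proof (cases "\<beta> \<ge> 0")
  case True
  then show ?thesis using assms by (simp add: powr_mono2')
next
  case False
  then show ?thesis using assms by (simp add: powr_mono2)
qed

lemma g_beta_growth:
  assumes "\<And>j. j < k \<Longrightarrow> norm (b j) = 1" "bounded (h ` ball 0 1)"
  shows "\<exists>K. \<forall>z\<in>ball 0 1. norm (g_beta \<beta> k a b h z) \<le> K * (1 - norm z) powr (- max \<beta> 0)"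
proof -
  obtain H where H: "\<And>z. z \<in> ball 0 1 \<Longrightarrow> norm (h z) \<le> H"
    using assms(2) unfolding bounded_iff by blast
  define c where "c = 2 powr (max \<beta> 0 - \<beta>)"
  define K where "K = (\<Sum>j<k. norm (a j)) * c + max H 0"
  have "norm (g_beta \<beta> k a b h z) \<le> K * (1 - norm z) powr (- max \<beta> 0)"
    if z: "z \<in> ball 0 1" for z
  proof -
    define s where "s = 1 - norm z"
    have s: "0 < s" "s \<le> 1" using z by (auto simp: s_def)
    have "1 \<le> s powr (- max \<beta> 0)"
      using powr_mono'[of "- max \<beta> 0" 0 s] s by simp
    then have h_le: "norm (h z) \<le> max H 0 * s powr (- max \<beta> 0)"
      using H[OF z] mult_left_mono[of 1 "s powr (- max \<beta> 0)" "max H 0"] by simp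
    have term_le: "norm (a j / (1 - b j * z) powr \<beta>) \<le> norm (a j) * c * s powr (- max \<beta> 0)"
      if j: "j < k" for j
    proof -
      note bounds = unimodular_shift_bounds[OF assms(1)[OF j] z]
      have "norm (a j / (1 - b j * z) powr \<beta>) = norm (a j) * norm (1 - b j * z) powr (-\<beta>)"
        by (simp add: norm_divide norm_powr_real_powr' powr_minus_divide)
      also have "\<dots> \<le> norm (a j) * (c * s powr (- max \<beta> 0))"
        unfolding c_def using bounds s
        by (intro mult_left_mono powr_minus_le_two_powr) (auto simp: s_def)
      finally show ?thesis by (simp add: mult.assoc)
    qed
    have "norm (g_beta \<beta> k a b h z) \<le> (\<Sum>j<k. norm (a j / (1 - b j * z) powr \<beta>)) + norm (h z)"
      unfolding g_beta_def by (intro order_trans[OF norm_triangle_ineq] add_mono norm_sum) auto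
    also have "\<dots> \<le> (\<Sum>j<k. norm (a j) * c * s powr (- max \<beta> 0)) + max H 0 * s powr (- max \<beta> 0)"
      by (intro add_mono sum_mono term_le h_le) auto
    also have "\<dots> = K * s powr (- max \<beta> 0)"
      by (simp add: K_def sum_distrib_right distrib_right)
    finally show ?thesis by (simp add: s_def)
  qed
  then show ?thesis by blast
qed

lemma contour_integral_linepath_cong_off_start:
  assumes "\<And>w. w \<noteq> a \<Longrightarrow> F w = G w"
  shows "contour_integral (linepath a z) F = contour_integral (linepath a z) G"
proof (cases "z = a")
  case False
  then show ?thesis
    by (intro contour_integral_spike_finite_simple_path[of "{a}"]) (use assms in auto)
qed simp

lemma contour_integral_linepath_has_field_derivative:
  assumes "F holomorphic_on S" "convex S" "open S" "a \<in> S" "z \<in> S"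
  shows "((\<lambda>x. contour_integral (linepath a x) F) has_field_derivative F z) (at z)"
proof -
  have "((\<lambda>x. contour_integral (linepath a x) F) has_field_derivative F z) (at z within S)"
  proof (rule triangle_contour_integrals_convex_primitive[OF _ assms(4,2,5)])
    show "continuous_on S F"
      using assms(1) by (rule holomorphic_on_imp_continuous_on)
    fix b c assume "b \<in> S" "c \<in> S"
    then have "path_image (linepath a b +++ linepath b c +++ linepath c a) \<subseteq> S"
      using assms(2,4) by (auto simp: path_image_join dest: closed_segment_subset)
    then have "(F has_contour_integral 0) (linepath a b +++ linepath b c +++ linepath c a)"
      by (intro Cauchy_theorem_convex_simple[OF assms(1,2)]) auto
    then show "contour_integral (linepath a b) F + contour_integral (linepath b c) F +
        contour_integral (linepath c a) F = 0"
      by (rule has_chain_integral_chain_integral3)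
  qed
  then show ?thesis
    unfolding at_within_open[OF assms(5,3)] .
qed

lemma cesaro_op_eq_contour_integral_slope0:
  assumes "f 0 = 0"
  shows "cesaro_op g f z = contour_integral (linepath 0 z) (\<lambda>w. slope0 f w * g w)"
  unfolding cesaro_op_def
  by (rule contour_integral_linepath_cong_off_start) (simp add: slope0_def assms)

lemma cesaro_op_has_field_derivative:
  assumes "g holomorphic_on ball 0 1" "f holomorphic_on ball 0 1" "f 0 = 0" "z \<in> ball 0 1"
  shows "(cesaro_op g f has_field_derivative slope0 f z * g z) (at z)"
proof -
  have hol: "(\<lambda>w. slope0 f w * g w) holomorphic_on ball 0 1"
    using holomorphic_on_slope0[OF assms(2) open_ball] assms(1) by (intro holomorphic_intros)
  have "cesaro_op g f = (\<lambda>x. contour_integral (linepath 0 x) (\<lambda>w. slope0 f w * g w))"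
    using cesaro_op_eq_contour_integral_slope0[of f, OF assms(3)] by blast
  then show ?thesis
    using contour_integral_linepath_has_field_derivative[OF hol convex_ball open_ball _ assms(4)] by simp
qed

lemma cesaro_op_linear:
  assumes "g holomorphic_on ball 0 1" "z \<in> ball 0 1"
    and "f holomorphic_on ball 0 1" "f 0 = 0" "f' holomorphic_on ball 0 1" "f' 0 = 0"
  shows "cesaro_op g (\<lambda>w. c * f w + d * f' w) z = c * cesaro_op g f z + d * cesaro_op g f' z"
proof -
  have integrable: "(\<lambda>w. slope0 F w * g w) contour_integrable_on linepath 0 z"
    if "F holomorphic_on ball 0 1" for F
  proof (rule contour_integrable_holomorphic_simple[OF _ open_ball])
    show "(\<lambda>w. slope0 F w * g w) holomorphic_on ball 0 1"
      using holomorphic_on_slope0[OF that open_ball] assms(1) by (intro holomorphic_intros)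
    show "path_image (linepath 0 z) \<subseteq> ball 0 1"
      using assms(2) by (simp add: closed_segment_subset)
  qed simp
  have "cesaro_op g (\<lambda>w. c * f w + d * f' w) z =
      contour_integral (linepath 0 z) (\<lambda>w. c * (slope0 f w * g w) + d * (slope0 f' w * g w))"
    unfolding cesaro_op_def
    by (rule contour_integral_linepath_cong_off_start) (simp add: slope0_def assms field_simps)
  also have "\<dots> = c * cesaro_op g f z + d * cesaro_op g f' z"
    using integrable[OF assms(3)] integrable[OF assms(5)]
    by (simp add: contour_integral_add contour_integrable_lmul contour_integral_lmul
        cesaro_op_eq_contour_integral_slope0 assms)
  finally show ?thesis .
qed

lemma cesaro_op_bloch_space0:
  assumes "g holomorphic_on ball 0 1" "f holomorphic_on ball 0 1" "f 0 = 0"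
    and bd: "\<And>z. z \<in> ball 0 1 \<Longrightarrow> (1 - (norm z)\<^sup>2) powr \<alpha> * norm (slope0 f z * g z) \<le> B"
  shows "cesaro_op g f \<in> bloch_space0 \<alpha>" "bloch_norm \<alpha> (cesaro_op g f) \<le> B"
proof -
  note D = cesaro_op_has_field_derivative[OF assms(1-3)]
  have hol: "cesaro_op g f holomorphic_on ball 0 1"
    unfolding holomorphic_on_def field_differentiable_def
    using D has_field_derivative_at_within by blast
  have weighted: "(1 - (norm z)\<^sup>2) powr \<alpha> * norm (deriv (cesaro_op g f) z) \<le> B"
    if "z \<in> ball 0 1" for z
    using bd[OF that] by (simp add: DERIV_imp_deriv[OF D[OF that]])
  show "cesaro_op g f \<in> bloch_space0 \<alpha>"
    by (rule bloch_space0I[OF hol _ weighted]) (simp add: cesaro_op_def)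
  show "bloch_norm \<alpha> (cesaro_op g f) \<le> B"
    by (rule bloch_norm_le[OF weighted])
qed

lemma cesaro_op_bloch_space0_norm_le:
  assumes "g holomorphic_on ball 0 1" and f: "f \<in> bloch_space0 \<alpha>"
    and "0 \<le> \<alpha>" "\<alpha> \<le> \<gamma>" "\<gamma> \<noteq> 1" "max 0 (\<gamma> - 1) + \<beta> \<le> \<alpha>"
    and g: "\<And>w. w \<in> ball 0 1 \<Longrightarrow> norm (g w) \<le> K * (1 - norm w) powr (-\<beta>)"
  shows "cesaro_op g f \<in> bloch_space0 \<alpha>"
    "bloch_norm \<alpha> (cesaro_op g f) \<le> 2 powr \<alpha> * max (2 powr \<gamma>) (2 / \<bar>1 - \<gamma>\<bar>) * K * bloch_norm \<alpha> f"
proof -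
  have "(1 - (norm z)\<^sup>2) powr \<alpha> * norm (slope0 f z * g z)
      \<le> 2 powr \<alpha> * max (2 powr \<gamma>) (2 / \<bar>1 - \<gamma>\<bar>) * K * bloch_norm \<alpha> f"
    if "z \<in> ball 0 1" for z
    using bloch_space0D(3)[OF f] assms(3-6) g that by (rule weighted_norm_slope0_mult_le)
  with cesaro_op_bloch_space0[OF assms(1) bloch_space0D(1,2)[OF f]]
  show "cesaro_op g f \<in> bloch_space0 \<alpha>"
    "bloch_norm \<alpha> (cesaro_op g f) \<le> 2 powr \<alpha> * max (2 powr \<gamma>) (2 / \<bar>1 - \<gamma>\<bar>) * K * bloch_norm \<alpha> f"
    by blast+
qed

theorem corollary2p2:
  fixes \<alpha> \<beta> :: real and k :: nat and a b :: "nat \<Rightarrow> complex" and h :: "complex \<Rightarrow> complex"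
  assumes "\<alpha> > 0"
    and "(\<beta> \<le> \<alpha> \<and> \<alpha> < 1) \<or> (\<beta> \<le> 1 \<and> 1 < \<alpha>) \<or> (\<beta> < \<alpha> \<and> \<alpha> = 1)"
    and "k \<ge> 1"
    and "inj_on b {..<k}"
    and "\<And>j. j < k \<Longrightarrow> norm (b j) = 1"
    and "\<And>j. j < k \<Longrightarrow> a j \<noteq> 0"
    and "h holomorphic_on ball 0 1"
    and "bounded (h ` ball 0 1)"
  shows "(\<forall>f\<in>bloch_space0 \<alpha>. cesaro_op (g_beta \<beta> k a b h) f \<in> bloch_space0 \<alpha>)
    \<and> (\<forall>f\<in>bloch_space0 \<alpha>. \<forall>f'\<in>bloch_space0 \<alpha>. \<forall>c d. \<forall>z\<in>ball 0 1.
          cesaro_op (g_beta \<beta> k a b h) (\<lambda>w. c * f w + d * f' w) z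
          = c * cesaro_op (g_beta \<beta> k a b h) f z + d * cesaro_op (g_beta \<beta> k a b h) f' z)
    \<and> (\<exists>C. \<forall>f\<in>bloch_space0 \<alpha>.
          bloch_norm \<alpha> (cesaro_op (g_beta \<beta> k a b h) f) \<le> C * bloch_norm \<alpha> f)"
proof -
  define g where "g = g_beta \<beta> k a b h"
  have hol: "g holomorphic_on ball 0 1"
    unfolding g_def using assms(5,7) by (rule g_beta_holomorphic)
  obtain \<gamma> where \<gamma>: "0 < \<gamma>" "\<gamma> \<noteq> 1" "\<alpha> \<le> \<gamma>" "max 0 (\<gamma> - 1) + max \<beta> 0 \<le> \<alpha>"
    using exists_admissible_exponent[OF assms(1,2)] by blast
  have "\<exists>K. \<forall>z\<in>ball 0 1. norm (g z) \<le> K * (1 - norm z) powr (- max \<beta> 0)"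
    unfolding g_def by (rule g_beta_growth[OF assms(5,8)])
  then obtain K where K: "\<And>z. z \<in> ball 0 1 \<Longrightarrow> norm (g z) \<le> K * (1 - norm z) powr (- max \<beta> 0)"
    by blast
  note bounded = cesaro_op_bloch_space0_norm_le[OF hol _ _ \<gamma>(3,2,4) K]
  have linear: "cesaro_op g (\<lambda>w. c * f w + d * f' w) z = c * cesaro_op g f z + d * cesaro_op g f' z"
    if "f \<in> bloch_space0 \<alpha>" "f' \<in> bloch_space0 \<alpha>" "z \<in> ball 0 1" for f f' c d z
    using cesaro_op_linear[OF hol that(3) bloch_space0D(1,2)[OF that(1)] bloch_space0D(1,2)[OF that(2)]] .
  show ?thesis
    unfolding g_def[symmetric] using bounded assms(1) linear by (meson less_imp_le)
qed

end
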